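(* Let $p$ be a probability distribution over $\{0,1\}^n$ and let $\gamma>0$. For every $\epsilon<\gamma/2$ the following holds: if the adapted ancestral sampling algorithm is given black-box access to real numbers $\pi(x_{1:k})$, for all $k\in[n]$ and all $x_{1:k}\in\{0,1\}^k$, satisfying $|\pi(x_{1:k})-p(x_{1:k})|\le \epsilon/2^k$, then it samples from a distribution $q$ with $$\|q-p\|_{\mathrm{TV}}\le \mathfrak{f}(\gamma)+\exp\!\left(\frac{4\epsilon n}{\gamma}\right)-1 .$$
   Context: For $x\in\{0,1\}^n$, $x_{1:k}=(x_1,\dots,x_k)$ and $p(x_{1:k})=\sum_{x_{k+1},\dots,x_n}p(x)$ is the marginal. Adapted ancestral sampling algorithm: given the estimates $\pi(\cdot)$, it produces $x$ bit by bit; at step $k$, with $x_{1:k-1}$ already fixed, let $a=\pi(x_{1:k-1},0)$ and $b=\pi(x_{1:k-1},1)$. If $a,b\ge0$, it sets $x_k=0$ with probability $a/(a+b)$ and $x_k=1$ otherwise; if one of $a,b$ is negative, it deterministically sets $x_k$ to the value whose estimate is non-negative. The output distribution is $q$. Define $S_\gamma=\{x\in\{0,1\}^n:\ p(x_{1:k})\ge\gamma/2^k\ \text{for all } k\in[n]\}$ and $\mathfrak{f}(\gamma)=1-\sum_{x\in S_\gamma}p(x)$. $\|\cdot\|_{\mathrm{TV}}$ is total variation distance. *)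

theory Defs
  imports "HOL-Analysis.Analysis"
begin

text \<open>Bit strings x \<in> {0,1}^n are modelled as bool lists of length n
  (False = 0, True = 1).\<close>

definition bitstrings :: "nat \<Rightarrow> bool list set" where
  "bitstrings n = {xs. length xs = n}"

definition is_distribution :: "nat \<Rightarrow> (bool list \<Rightarrow> real) \<Rightarrow> bool" where
  "is_distribution n p \<longleftrightarrow> (\<forall>x\<in>bitstrings n. p x \<ge> 0) \<and> (\<Sum>x\<in>bitstrings n. p x) = 1"

definition marginal :: "nat \<Rightarrow> (bool list \<Rightarrow> real) \<Rightarrow> bool list \<Rightarrow> real" where
  "marginal n p u = (\<Sum>y\<in>bitstrings (n - length u). p (u @ y))"

text \<open>In the cases not specified by
  the algorithm (both estimates negative, or both zero) the behaviour is
  arbitrary: the next bit is 0 with probability c u, where c is an arbitrary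
  function with values in [0,1].\<close>
definition step_prob :: "(bool list \<Rightarrow> real) \<Rightarrow> (bool list \<Rightarrow> real) \<Rightarrow> bool list \<Rightarrow> bool \<Rightarrow> real" where
  "step_prob \<pi> c u v =
     (let a = \<pi> (u @ [False]); b = \<pi> (u @ [True]);
          prob0 = (if a \<ge> 0 \<and> b \<ge> 0 \<and> a + b > 0 then a / (a + b)
                   else if a \<ge> 0 \<and> b < 0 then 1
                   else if a < 0 \<and> b \<ge> 0 then 0
                   else c u)
      in if v then 1 - prob0 else prob0)"

definition sampler_dist :: "(bool list \<Rightarrow> real) \<Rightarrow> (bool list \<Rightarrow> real) \<Rightarrow> bool list \<Rightarrow> real" where
  "sampler_dist \<pi> c x = (\<Prod>k<length x. step_prob \<pi> c (take k x) (x ! k))"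

definition S_gamma :: "nat \<Rightarrow> (bool list \<Rightarrow> real) \<Rightarrow> real \<Rightarrow> bool list set" where
  "S_gamma n p \<gamma> = {x\<in>bitstrings n. \<forall>k\<in>{1..n}. marginal n p (take k x) \<ge> \<gamma> / 2 ^ k}"

definition frak_f :: "nat \<Rightarrow> (bool list \<Rightarrow> real) \<Rightarrow> real \<Rightarrow> real" where
  "frak_f n p \<gamma> = 1 - (\<Sum>x\<in>S_gamma n p \<gamma>. p x)"

definition tv_dist :: "nat \<Rightarrow> (bool list \<Rightarrow> real) \<Rightarrow> (bool list \<Rightarrow> real) \<Rightarrow> real" where
  "tv_dist n q p = (1/2) * (\<Sum>x\<in>bitstrings n. \<bar>q x - p x\<bar>)"

end

theory Submission
  imports Defs "HOL-Library.Sublist"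
begin

(* At every prefix u of a string in S_gamma the estimate of the marginal of the chosen child is
   off by at most (eps/gamma) times that marginal, so the sampler reproduces the conditional
   probability p(u v) / p(u) up to a factor 1 - eps/gamma.  Multiplying over the n steps gives
   q(x) >= (1 - eps/gamma)^n p(x) on S_gamma, which bounds the total variation by
   f(gamma) + n eps/gamma; Bernoulli's inequality and 1 + x <= exp x finish the comparison. *)

lemma bitstrings_0: "bitstrings 0 = {[]}"
  by (simp add: bitstrings_def)

lemma bitstrings_Suc: "bitstrings (Suc m) = Cons False ` bitstrings m \<union> Cons True ` bitstrings m"
  unfolding bitstrings_def
proof (intro equalityI subsetI)
  fix x :: "bool list" assume "x \<in> {xs. length xs = Suc m}"
  then obtain b y where "x = b # y" "length y = m" by (auto simp: length_Suc_conv)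
  then show "x \<in> Cons False ` {xs. length xs = m} \<union> Cons True ` {xs. length xs = m}"
    by (cases b) auto
qed auto

lemma bitstrings_Suc_snoc:
  "bitstrings (Suc m) = (\<lambda>x. x @ [False]) ` bitstrings m \<union> (\<lambda>x. x @ [True]) ` bitstrings m"
  unfolding bitstrings_def
proof (intro equalityI subsetI)
  fix x :: "bool list" assume "x \<in> {xs. length xs = Suc m}"
  then obtain b y where "x = y @ [b]" "length y = m"
    by (cases x rule: rev_cases) auto
  then show "x \<in> (\<lambda>x. x @ [False]) ` {xs. length xs = m} \<union> (\<lambda>x. x @ [True]) ` {xs. length xs = m}"
    by (cases b) auto
qed auto

lemma finite_bitstrings [simp]: "finite (bitstrings m)"
  by (induct m) (auto simp: bitstrings_0 bitstrings_Suc)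

lemma sum_bitstrings_Suc:
  "(\<Sum>y\<in>bitstrings (Suc m). f y) = (\<Sum>y\<in>bitstrings m. f (False # y)) + (\<Sum>y\<in>bitstrings m. f (True # y))"
  unfolding bitstrings_Suc by (subst sum.union_disjoint) (auto simp: sum.reindex)

lemma sum_bitstrings_Suc_snoc:
  "(\<Sum>y\<in>bitstrings (Suc m). f y) = (\<Sum>y\<in>bitstrings m. f (y @ [False])) + (\<Sum>y\<in>bitstrings m. f (y @ [True]))"
  unfolding bitstrings_Suc_snoc by (subst sum.union_disjoint) (auto simp: sum.reindex inj_on_def)

lemma marginal_Nil: "is_distribution n p \<Longrightarrow> marginal n p [] = 1"
  by (simp add: marginal_def is_distribution_def)

lemma marginal_full: "length x = n \<Longrightarrow> marginal n p x = p x"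
  by (simp add: marginal_def bitstrings_0)

lemma marginal_nonneg: "is_distribution n p \<Longrightarrow> length u \<le> n \<Longrightarrow> 0 \<le> marginal n p u"
  unfolding marginal_def is_distribution_def bitstrings_def by (intro sum_nonneg) auto

lemma marginal_split:
  assumes "length u < n"
  shows "marginal n p u = marginal n p (u @ [False]) + marginal n p (u @ [True])"
proof -
  have "n - length u = Suc (n - Suc (length u))" using assms by simp
  then show ?thesis unfolding marginal_def by (simp add: sum_bitstrings_Suc)
qed

lemma step_prob_False_plus_True: "step_prob \<pi> c u False + step_prob \<pi> c u True = 1"
  by (simp add: step_prob_def Let_def)

lemma step_prob_nonneg: "c u \<in> {0..1} \<Longrightarrow> 0 \<le> step_prob \<pi> c u v"
  by (auto simp: step_prob_def Let_def divide_le_eq_1)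

lemma step_prob_eq_1:
  assumes "0 < \<pi> (u @ [v])" "\<pi> (u @ [\<not> v]) < 0"
  shows "step_prob \<pi> c u v = 1"
  using assms by (cases v) (auto simp: step_prob_def Let_def)

lemma step_prob_eq_ratio:
  assumes "0 < \<pi> (u @ [v])" "0 \<le> \<pi> (u @ [\<not> v])"
  shows "step_prob \<pi> c u v = \<pi> (u @ [v]) / (\<pi> (u @ [v]) + \<pi> (u @ [\<not> v]))"
  using assms by (cases v) (auto simp: step_prob_def Let_def field_simps)

lemma sampler_dist_Nil: "sampler_dist \<pi> c [] = 1"
  by (simp add: sampler_dist_def)

lemma sampler_dist_snoc: "sampler_dist \<pi> c (x @ [b]) = sampler_dist \<pi> c x * step_prob \<pi> c x b"
proof -
  have "(\<Prod>k<length x. step_prob \<pi> c (take k (x @ [b])) ((x @ [b]) ! k)) = sampler_dist \<pi> c x"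
    unfolding sampler_dist_def by (intro prod.cong) (auto simp: nth_append)
  then show ?thesis by (simp add: sampler_dist_def)
qed

lemma is_distribution_sampler_dist:
  assumes "\<And>u. c u \<in> {0..1}"
  shows "is_distribution m (sampler_dist \<pi> c)"
proof -
  have "(\<Sum>x\<in>bitstrings m. sampler_dist \<pi> c x) = 1"
  proof (induct m)
    case (Suc m)
    then show ?case
      by (simp add: sum_bitstrings_Suc_snoc sampler_dist_snoc sum.distrib[symmetric]
          distrib_left[symmetric] step_prob_False_plus_True)
  qed (simp add: bitstrings_0 sampler_dist_Nil)
  moreover have "0 \<le> sampler_dist \<pi> c x" for x
    unfolding sampler_dist_def using assms by (intro prod_nonneg step_prob_nonneg) auto
  ultimately show ?thesis by (simp add: is_distribution_def)
qed

(* A / (A + B) is increasing in A and decreasing in B. *)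
lemma ratio_lower_bound:
  fixes A B M N e :: real
  assumes "0 \<le> N" "0 < M - e" "M - e \<le> A" "0 \<le> B" "B \<le> N + e"
  shows "M - e \<le> A / (A + B) * (M + N)"
proof -
  have "(M - e) * B \<le> (M - e) * (N + e)" using assms by (intro mult_left_mono) auto
  also have "\<dots> \<le> A * (N + e)" using assms by (intro mult_right_mono) auto
  finally have "(M - e) * (A + B) \<le> A * (M + N)" by (simp add: algebra_simps)
  then show ?thesis using assms by (simp add: field_simps)
qed

lemma marginal_minus_le_step_prob:
  assumes "is_distribution n p" "length u < n"
    and "\<bar>\<pi> (u @ [v]) - marginal n p (u @ [v])\<bar> \<le> e"
    and "\<bar>\<pi> (u @ [\<not> v]) - marginal n p (u @ [\<not> v])\<bar> \<le> e"
    and "e < marginal n p (u @ [v])"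
  shows "marginal n p (u @ [v]) - e \<le> step_prob \<pi> c u v * marginal n p u"
proof -
  define M N where "M = marginal n p (u @ [v])" and "N = marginal n p (u @ [\<not> v])"
  have N: "0 \<le> N" unfolding N_def using assms(1,2) by (simp add: marginal_nonneg)
  have split: "marginal n p u = M + N"
    unfolding M_def N_def using marginal_split[OF assms(2)] by (cases v) auto
  have pos: "0 < \<pi> (u @ [v])" using assms(3,5) by (simp add: M_def)
  show ?thesis
  proof (cases "\<pi> (u @ [\<not> v]) < 0")
    case True
    then have "step_prob \<pi> c u v = 1" using pos by (intro step_prob_eq_1)
    then show ?thesis using N assms(3) split by (simp add: M_def)
  next
    case False
    then have "step_prob \<pi> c u v = \<pi> (u @ [v]) / (\<pi> (u @ [v]) + \<pi> (u @ [\<not> v]))"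
      using pos by (intro step_prob_eq_ratio) auto
    then show ?thesis
      using ratio_lower_bound[OF N] False assms(3-5) split by (simp add: M_def N_def)
  qed
qed

lemma sampler_dist_lower_bound:
  assumes "\<And>u. c u \<in> {0..1}" "m [] = 1" "0 \<le> a"
    and "\<And>u v. prefix (u @ [v]) x \<Longrightarrow> a * m (u @ [v]) \<le> step_prob \<pi> c u v * m u"
  shows "a ^ length x * m x \<le> sampler_dist \<pi> c x"
  using assms(4)
proof (induction x rule: rev_induct)
  case Nil
  then show ?case by (simp add: assms(2) sampler_dist_Nil)
next
  case (snoc v u)
  have "a ^ length (u @ [v]) * m (u @ [v]) = a ^ length u * (a * m (u @ [v]))" by simp
  also have "\<dots> \<le> a ^ length u * (step_prob \<pi> c u v * m u)"
    using snoc.prems assms(3) by (intro mult_left_mono) auto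
  also have "\<dots> = step_prob \<pi> c u v * (a ^ length u * m u)" by simp
  also have "\<dots> \<le> step_prob \<pi> c u v * sampler_dist \<pi> c u"
    using snoc step_prob_nonneg[OF assms(1)] by (intro mult_left_mono) auto
  finally show ?case by (simp add: sampler_dist_snoc mult.commute)
qed

lemma S_gamma_step_bound:
  assumes "is_distribution n p" "0 < \<gamma>" "\<epsilon> < \<gamma>"
    and approx: "\<And>u. length u \<in> {1..n} \<Longrightarrow> \<bar>\<pi> u - marginal n p u\<bar> \<le> \<epsilon> / 2 ^ length u"
    and "x \<in> S_gamma n p \<gamma>" "prefix (u @ [v]) x"
  shows "(1 - \<epsilon> / \<gamma>) * marginal n p (u @ [v]) \<le> step_prob \<pi> c u v * marginal n p u"
proof -
  define k where "k = Suc (length u)"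
  have "length x = n" and large: "\<And>j. j \<in> {1..n} \<Longrightarrow> \<gamma> / 2 ^ j \<le> marginal n p (take j x)"
    using assms(5) by (auto simp: S_gamma_def bitstrings_def)
  moreover have "take k x = u @ [v]" "k \<le> length x"
    using assms(6) by (auto simp: prefix_def k_def)
  ultimately have k: "k \<in> {1..n}" and M: "\<gamma> / 2 ^ k \<le> marginal n p (u @ [v])"
    using large[of k] by (auto simp: k_def)
  have approx_k: "\<bar>\<pi> w - marginal n p w\<bar> \<le> \<epsilon> / 2 ^ k" if "length w = k" for w
    using approx[of w] that k by simp
  have "\<bar>\<pi> (u @ [v]) - marginal n p (u @ [v])\<bar> \<le> \<epsilon> / 2 ^ k" using approx_k by (simp add: k_def)
  then have "0 \<le> \<epsilon> / 2 ^ k" by (rule order_trans[OF abs_ge_zero])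
  then have "0 \<le> \<epsilon>" by (simp add: pos_le_divide_eq)
  have "\<epsilon> / 2 ^ k = \<epsilon> / \<gamma> * (\<gamma> / 2 ^ k)" using assms(2) by simp
  also have "\<dots> \<le> \<epsilon> / \<gamma> * marginal n p (u @ [v])"
    using M \<open>0 \<le> \<epsilon>\<close> assms(2) by (intro mult_left_mono) auto
  finally have err_le: "\<epsilon> / 2 ^ k \<le> \<epsilon> / \<gamma> * marginal n p (u @ [v])" .
  have "\<epsilon> / 2 ^ k < \<gamma> / 2 ^ k" using assms(3) by (simp add: divide_strict_right_mono)
  then have "marginal n p (u @ [v]) - \<epsilon> / 2 ^ k \<le> step_prob \<pi> c u v * marginal n p u"
    using marginal_minus_le_step_prob[OF assms(1)] approx_k M k by (simp add: k_def)
  then show ?thesis using err_le by (simp add: algebra_simps)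
qed

lemma sampler_dist_ge_on_S_gamma:
  assumes "is_distribution n p" "0 < \<gamma>" "\<epsilon> < \<gamma>" "\<And>u. c u \<in> {0..1}"
    and "\<And>u. length u \<in> {1..n} \<Longrightarrow> \<bar>\<pi> u - marginal n p u\<bar> \<le> \<epsilon> / 2 ^ length u"
    and "x \<in> S_gamma n p \<gamma>"
  shows "(1 - \<epsilon> / \<gamma>) ^ n * p x \<le> sampler_dist \<pi> c x"
proof -
  have "length x = n" using assms(6) by (simp add: S_gamma_def bitstrings_def)
  moreover have "(1 - \<epsilon> / \<gamma>) ^ length x * marginal n p x \<le> sampler_dist \<pi> c x"
    using assms by (intro sampler_dist_lower_bound S_gamma_step_bound marginal_Nil) auto
  ultimately show ?thesis by (simp add: marginal_full)
qed

lemma half_sum_abs_diff_le: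
  fixes p q :: "'a \<Rightarrow> real"
  assumes "finite B" "S \<subseteq> B" "\<And>x. x \<in> B \<Longrightarrow> 0 \<le> p x" "\<And>x. x \<in> B \<Longrightarrow> 0 \<le> q x"
    and "sum p B = 1" "sum q B = 1" "a \<le> 1" "\<And>x. x \<in> S \<Longrightarrow> a * p x \<le> q x"
  shows "(1/2) * (\<Sum>x\<in>B. \<bar>q x - p x\<bar>) \<le> (1 - sum p S) + (1 - a)"
proof -
  have "\<bar>q x - p x\<bar> = (q x - p x) + 2 * max 0 (p x - q x)" for x by (auto simp: abs_if max_def)
  then have "(1/2) * (\<Sum>x\<in>B. \<bar>q x - p x\<bar>) = (\<Sum>x\<in>B. max 0 (p x - q x))"
    using assms(5,6) by (simp add: sum.distrib sum_subtractf sum_distrib_left)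
  also have "\<dots> = (\<Sum>x\<in>S. max 0 (p x - q x)) + (\<Sum>x\<in>B - S. max 0 (p x - q x))"
    using assms(1,2) by (metis add.commute sum.subset_diff)
  also have "\<dots> \<le> (\<Sum>x\<in>S. (1 - a) * p x) + (\<Sum>x\<in>B - S. p x)"
  proof (intro add_mono sum_mono)
    fix x assume "x \<in> S"
    then have "0 \<le> (1 - a) * p x" using assms(2,3,7) by auto
    moreover have "p x - q x \<le> (1 - a) * p x" using assms(8) \<open>x \<in> S\<close> by (simp add: algebra_simps)
    ultimately show "max 0 (p x - q x) \<le> (1 - a) * p x" by simp
  qed (use assms(3,4) in auto)
  also have "\<dots> = (1 - a) * sum p S + (1 - sum p S)"
    using assms(1,2,5) by (simp add: sum_distrib_left sum_diff finite_subset)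
  also have "\<dots> \<le> (1 - a) + (1 - sum p S)"
    using assms(1-3,5,7) sum_mono2[of B S p] by (intro add_right_mono mult_left_le) auto
  finally show ?thesis by simp
qed

theorem theorem7:
  fixes n :: nat and p \<pi> c :: "bool list \<Rightarrow> real" and \<gamma> \<epsilon> :: real
  assumes "is_distribution n p"
    and "\<gamma> > 0"
    and "\<epsilon> < \<gamma> / 2"
    and "\<And>u. c u \<in> {0 .. 1}"
    and "\<And>u. length u \<in> {1..n} \<Longrightarrow> \<bar>\<pi> u - marginal n p u\<bar> \<le> \<epsilon> / 2 ^ length u"
  shows "tv_dist n (sampler_dist \<pi> c) p \<le> frak_f n p \<gamma> + exp (4 * \<epsilon> * n / \<gamma>) - 1"
proof -
  define t where "t = \<epsilon> / \<gamma>"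
  have "t < 1" using assms(2,3) by (simp add: t_def)
  have "0 \<le> t \<or> n = 0"
  proof (cases "n = 0")
    case False
    then have "\<bar>\<pi> [False] - marginal n p [False]\<bar> \<le> \<epsilon> / 2" using assms(5)[of "[False]"] by simp
    then have "0 \<le> \<epsilon> / 2" by (rule order_trans[OF abs_ge_zero])
    then show ?thesis using assms(2) by (simp add: t_def)
  qed simp
  then have "0 \<le> n * t" by auto
  have "(1 - t) ^ n \<le> 1" using \<open>0 \<le> t \<or> n = 0\<close> \<open>t < 1\<close> by (auto intro: power_le_one)
  have "tv_dist n (sampler_dist \<pi> c) p \<le> frak_f n p \<gamma> + (1 - (1 - t) ^ n)"
    unfolding tv_dist_def frak_f_def
  proof (rule half_sum_abs_diff_le)
    show "S_gamma n p \<gamma> \<subseteq> bitstrings n" by (auto simp: S_gamma_def)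
    show "(1 - t) ^ n * p x \<le> sampler_dist \<pi> c x" if "x \<in> S_gamma n p \<gamma>" for x
      unfolding t_def using assms that by (intro sampler_dist_ge_on_S_gamma) auto
  qed (use assms(1) is_distribution_sampler_dist[OF assms(4)] \<open>(1 - t) ^ n \<le> 1\<close>
      in \<open>auto simp: is_distribution_def\<close>)
  moreover have "1 - (1 - t) ^ n \<le> n * t" using Bernoulli_inequality[of "- t" n] \<open>t < 1\<close> by simp
  moreover have "n * t \<le> exp (4 * (n * t)) - 1"
    using exp_ge_add_one_self[of "4 * (n * t)"] \<open>0 \<le> n * t\<close> by linarith
  moreover have "4 * (n * t) = 4 * \<epsilon> * n / \<gamma>" by (simp add: t_def)
  ultimately show ?thesis by simp
qed

end
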